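(* Let $S$ be a semigroup generated by a set $A$ and let $T$ be a subsemigroup of $S$ generated by a set $B$ and having finite Green index $n$ in $S$. Let $s\in S$ and $a_1,\ldots,a_{m+k}\in A$, and suppose that the elements $sa_1\cdots a_{m+1}, sa_1\cdots a_{m+2},\ldots, sa_1\cdots a_{m+k}$ together lie in at least $n$ distinct $\mathcal{R}^T$-classes. Then there exist $i$ with $m<i\le m+k$ and $b_1,\ldots,b_j\in B$ such that $sa_1\cdots a_i=b_1\cdots b_j$.
   Context: For a subsemigroup $T$ of a semigroup $S$, the relative Green's relations on $S$ are: $u\,\mathcal{R}^T v$ iff $uT^1=vT^1$, $u\,\mathcal{L}^T v$ iff $T^1u=T^1v$, and $\mathcal{H}^T=\mathcal{R}^T\cap\mathcal{L}^T$, where $T^1=T\cup\{1\}$. The Green index of $T$ in $S$ is one plus the number of $\mathcal{H}^T$-classes contained in $S\setminus T$. *)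

theory Defs
  imports Main
begin

inductive_set gen :: "'a::semigroup_mult set \<Rightarrow> 'a set" for X where
  gen_base: "x \<in> X \<Longrightarrow> x \<in> gen X"
| gen_mult: "x \<in> gen X \<Longrightarrow> y \<in> gen X \<Longrightarrow> x * y \<in> gen X"

text \<open>Product of a nonempty word x0 x1 ... xr, given as head and tail list.\<close>
definition wprod :: "'a::semigroup_mult \<Rightarrow> 'a list \<Rightarrow> 'a" where
  "wprod x xs = foldl (*) x xs"

definition rideal :: "'a::semigroup_mult set \<Rightarrow> 'a \<Rightarrow> 'a set" where
  "rideal T u = insert u ((\<lambda>t. u * t) ` T)"

definition lideal :: "'a::semigroup_mult set \<Rightarrow> 'a \<Rightarrow> 'a set" where
  "lideal T u = insert u ((\<lambda>t. t * u) ` T)"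

definition relR :: "'a::semigroup_mult set \<Rightarrow> 'a set \<Rightarrow> 'a rel" where
  "relR S T = {(u, v). u \<in> S \<and> v \<in> S \<and> rideal T u = rideal T v}"

definition relL :: "'a::semigroup_mult set \<Rightarrow> 'a set \<Rightarrow> 'a rel" where
  "relL S T = {(u, v). u \<in> S \<and> v \<in> S \<and> lideal T u = lideal T v}"

definition relH :: "'a::semigroup_mult set \<Rightarrow> 'a set \<Rightarrow> 'a rel" where
  "relH S T = relR S T \<inter> relL S T"

definition finite_green_index :: "'a::semigroup_mult set \<Rightarrow> 'a set \<Rightarrow> nat \<Rightarrow> bool" where
  "finite_green_index S T n \<longleftrightarrow>
     (let Cs = {C \<in> S // relH S T. C \<subseteq> S - T} in finite Cs \<and> n = 1 + card Cs)"

end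

theory Submission
  imports Defs
begin

text \<open>
  Suppose no prefix product  s a_1...a_i  with  m < i \<le> m+k  lies in T.
  Since T is closed under multiplication, an element whose relative R-class meets T
  lies itself in T (it belongs to  yT^1 \<subseteq> T  for some y in T); hence the relative
  H-class of every element outside T is contained in S - T.  Moreover the relative
  R-class of an element is determined by its relative H-class, as H refines R.  So the
  relative R-classes of elements of S - T are at most as many as the relative H-classes
  contained in S - T, i.e. at most n - 1, contradicting the hypothesis that the window
  meets n of them.  Thus some prefix product lies in T = gen B, and every element of
  gen B is the product of a nonempty word over B.
\<close>

lemma foldl_mult_left: "foldl (*) (x * y) zs = (x::'a::semigroup_mult) * foldl (*) y zs"
  by (induction zs arbitrary: y) (auto simp: mult.assoc)

lemma wprod_mult: "wprod b bs * wprod c cs = wprod b (bs @ c # cs)"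
  unfolding wprod_def by (simp add: foldl_mult_left)

lemma gen_imp_wprod:
  assumes "x \<in> gen B"
  shows "\<exists>b bs. b \<in> B \<and> set bs \<subseteq> B \<and> x = wprod b bs"
  using assms
proof (induction rule: gen.induct)
  case (gen_base x)
  then have "x \<in> B \<and> set [] \<subseteq> B \<and> x = wprod x []" by (simp add: wprod_def)
  then show ?case by (intro exI)
next
  case (gen_mult x y)
  then obtain b bs c cs where "b \<in> B" "set bs \<subseteq> B" "x = wprod b bs"
    and "c \<in> B" "set cs \<subseteq> B" "y = wprod c cs" by blast
  then have "x * y = wprod b (bs @ c # cs)" and "set (bs @ c # cs) \<subseteq> B"
    by (auto simp: wprod_mult)
  with \<open>b \<in> B\<close> show ?case by blast
qed

lemma wprod_in_gen:
  assumes "s \<in> gen A" and "set xs \<subseteq> A"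
  shows "wprod s xs \<in> gen A"
  using assms
proof (induction xs arbitrary: s)
  case Nil
  then show ?case by (simp add: wprod_def)
next
  case (Cons a xs)
  then have "s * a \<in> gen A" by (auto intro: gen.intros)
  with Cons show ?case by (simp add: wprod_def)
qed

text \<open>If T is closed under multiplication, an element relatively R-related to an element
  of T lies in T: it belongs to  yT^1 \<subseteq> T.\<close>
lemma relR_into_subsemigroup:
  assumes T_mult: "\<And>u t. u \<in> T \<Longrightarrow> t \<in> T \<Longrightarrow> u * t \<in> T"
    and xy: "(x, y) \<in> relR S T" and "y \<in> T"
  shows "x \<in> T"
proof -
  have "x \<in> rideal T y"
    using xy unfolding relR_def rideal_def by auto
  with \<open>y \<in> T\<close> T_mult show ?thesis
    unfolding rideal_def by auto
qed

lemma relH_class_outside: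
  assumes T_mult: "\<And>u t. u \<in> T \<Longrightarrow> t \<in> T \<Longrightarrow> u * t \<in> T"
    and "x \<in> S - T"
  shows "relH S T `` {x} \<subseteq> S - T"
proof
  fix y
  assume "y \<in> relH S T `` {x}"
  then have "y \<in> S" and xy: "(x, y) \<in> relR S T"
    unfolding relH_def relR_def by auto
  moreover have "y \<notin> T"
    using relR_into_subsemigroup[of T, OF T_mult xy] \<open>x \<in> S - T\<close> by blast
  ultimately show "y \<in> S - T" by simp
qed

text \<open>The relative R-class of x is recovered from its relative H-class, because H refines
  R and R is transitive.\<close>
lemma relR_class_from_relH_class:
  assumes "x \<in> S"
  shows "relR S T `` {x} = relR S T `` (relH S T `` {x})"
  using assms unfolding relH_def relR_def relL_def by auto

lemma card_relR_classes_outside: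
  assumes T_mult: "\<And>u t. u \<in> T \<Longrightarrow> t \<in> T \<Longrightarrow> u * t \<in> T"
    and X: "X \<subseteq> S - T"
    and fin: "finite {C \<in> S // relH S T. C \<subseteq> S - T}"
  shows "card ((\<lambda>x. relR S T `` {x}) ` X) \<le> card {C \<in> S // relH S T. C \<subseteq> S - T}"
    (is "card ?Rs \<le> card ?Cs")
proof -
  define hclass where "hclass x = relH S T `` {x}" for x
  have hclass_in: "hclass ` X \<subseteq> ?Cs"
    using X relH_class_outside[OF T_mult] unfolding hclass_def
    by (auto intro: quotientI)
  have "?Rs = (\<lambda>x. relR S T `` hclass x) ` X"
  proof (rule image_cong[OF refl])
    fix x
    assume "x \<in> X"
    with X show "relR S T `` {x} = relR S T `` hclass x"
      unfolding hclass_def by (intro relR_class_from_relH_class) auto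
  qed
  also have "\<dots> = Image (relR S T) ` (hclass ` X)"
    by (simp add: image_image)
  finally have "?Rs = Image (relR S T) ` (hclass ` X)" .
  then have "card ?Rs \<le> card (hclass ` X)"
    using hclass_in fin by (metis card_image_le finite_subset)
  also have "\<dots> \<le> card ?Cs"
    using hclass_in by (rule card_mono[OF fin])
  finally show ?thesis .
qed

theorem mainTheorem16:
  fixes S T A B :: "'a::semigroup_mult set" and n m k :: nat and s :: 'a and as :: "'a list"
  assumes "S = gen A"
    and "T \<subseteq> S" and "T = gen B"
    and "finite_green_index S T n"
    and "s \<in> S"
    and "length as = m + k" and "set as \<subseteq> A"
    and "card ((\<lambda>x. relR S T `` {x}) ` {wprod s (take i as) | i. m < i \<and> i \<le> m + k}) \<ge> n"
  shows "\<exists>i. m < i \<and> i \<le> m + k \<and>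
           (\<exists>b bs. b \<in> B \<and> set bs \<subseteq> B \<and> wprod s (take i as) = wprod b bs)"
proof -
  define W where "W = {wprod s (take i as) | i. m < i \<and> i \<le> m + k}"
  define Cs where "Cs = {C \<in> S // relH S T. C \<subseteq> S - T}"
  have fin: "finite Cs" and n: "n = 1 + card Cs"
    using assms(4) unfolding finite_green_index_def Cs_def Let_def by auto
  have T_mult: "u * t \<in> T" if "u \<in> T" "t \<in> T" for u t
    using that assms(3) by (auto intro: gen.intros)
  have W_in_S: "W \<subseteq> S"
    using assms(1,5,7) set_take_subset[of _ as] unfolding W_def
    by (force intro: wprod_in_gen)
  have "\<not> W \<subseteq> S - T"
  proof
    assume "W \<subseteq> S - T"
    then have "card ((\<lambda>x. relR S T `` {x}) ` W) \<le> card Cs"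
      using card_relR_classes_outside[OF T_mult _ fin[unfolded Cs_def]] unfolding Cs_def
      by blast
    with assms(8) n show False unfolding W_def by simp
  qed
  then obtain i where "m < i" "i \<le> m + k" "wprod s (take i as) \<in> gen B"
    using W_in_S assms(3) unfolding W_def by blast
  then show ?thesis using gen_imp_wprod by blast
qed

end
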